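(* Let $\pi:(X,T)\to(Y,S)$ be an almost one-to-one factor map between minimal systems. Then $(X,T)$ is syndetically equicontinuous if and only if $(Y,S)$ is syndetically equicontinuous.
   Context: Systems: compact metric $(X,\varrho)$ with continuous surjection; minimal: every orbit dense. Factor map: continuous surjection $\pi$ with $\pi\circ T=S\circ\pi$; almost one-to-one: $\{y\in Y:\pi^{-1}(y)\text{ is a singleton}\}$ is dense in $Y$. $S_T(U,\delta)=\{n\in\mathbb{N}:\exists x_1,x_2\in U,\ \varrho(T^nx_1,T^nx_2)>\delta\}$, $J_T(U,\delta)=\mathbb N\setminus S_T(U,\delta)$. A point $x$ is syndetically equicontinuous if for every $\varepsilon>0$ some neighborhood $U$ of $x$ has $J_T(U,\varepsilon)$ syndetic (bounded gaps); a system is syndetically equicontinuous if every point is. *)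

theory Defs
  imports "HOL-Analysis.Analysis"
begin

definition dyn_system :: "'a::metric_space set \<Rightarrow> ('a \<Rightarrow> 'a) \<Rightarrow> bool" where
  "dyn_system X T \<longleftrightarrow> compact X \<and> continuous_on X T \<and> T ` X = X"

definition minimal_system :: "'a::metric_space set \<Rightarrow> ('a \<Rightarrow> 'a) \<Rightarrow> bool" where
  "minimal_system X T \<longleftrightarrow> dyn_system X T \<and>
     (\<forall>x\<in>X. X \<subseteq> closure {(T ^^ n) x | n. True})"

definition factor_map ::
  "'a::metric_space set \<Rightarrow> ('a \<Rightarrow> 'a) \<Rightarrow> 'b::metric_space set \<Rightarrow> ('b \<Rightarrow> 'b) \<Rightarrow> ('a \<Rightarrow> 'b) \<Rightarrow> bool" where
  "factor_map X T Y S \<pi> \<longleftrightarrow> continuous_on X \<pi> \<and> \<pi> ` X = Y \<and> (\<forall>x\<in>X. \<pi> (T x) = S (\<pi> x))"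

definition almost_one_to_one ::
  "'a::metric_space set \<Rightarrow> ('a \<Rightarrow> 'a) \<Rightarrow> 'b::metric_space set \<Rightarrow> ('b \<Rightarrow> 'b) \<Rightarrow> ('a \<Rightarrow> 'b) \<Rightarrow> bool" where
  "almost_one_to_one X T Y S \<pi> \<longleftrightarrow> factor_map X T Y S \<pi> \<and>
     Y \<subseteq> closure {y\<in>Y. \<exists>!x. x \<in> X \<and> \<pi> x = y}"

definition S_set :: "('a::metric_space \<Rightarrow> 'a) \<Rightarrow> 'a set \<Rightarrow> real \<Rightarrow> nat set" where
  "S_set T U \<delta> = {n. \<exists>x1\<in>U. \<exists>x2\<in>U. dist ((T ^^ n) x1) ((T ^^ n) x2) > \<delta>}"

definition J_set :: "('a::metric_space \<Rightarrow> 'a) \<Rightarrow> 'a set \<Rightarrow> real \<Rightarrow> nat set" where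
  "J_set T U \<delta> = UNIV - S_set T U \<delta>"

definition syndetic :: "nat set \<Rightarrow> bool" where
  "syndetic A \<longleftrightarrow> (\<exists>L>0. \<forall>n. \<exists>m\<in>A. n \<le> m \<and> m < n + L)"

definition nbhd_in :: "'a::metric_space set \<Rightarrow> 'a \<Rightarrow> 'a set \<Rightarrow> bool" where
  "nbhd_in X x U \<longleftrightarrow> U \<subseteq> X \<and> (\<exists>V. openin (top_of_set X) V \<and> x \<in> V \<and> V \<subseteq> U)"

definition synd_equicont_point :: "'a::metric_space set \<Rightarrow> ('a \<Rightarrow> 'a) \<Rightarrow> 'a \<Rightarrow> bool" where
  "synd_equicont_point X T x \<longleftrightarrow>
     (\<forall>\<epsilon>>0. \<exists>U. nbhd_in X x U \<and> syndetic (J_set T U \<epsilon>))"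

definition synd_equicont :: "'a::metric_space set \<Rightarrow> ('a \<Rightarrow> 'a) \<Rightarrow> bool" where
  "synd_equicont X T \<longleftrightarrow> (\<forall>x\<in>X. synd_equicont_point X T x)"

end

theory Submission
  imports Defs
begin

text \<open>Fix a point \<open>x\<^sub>0\<close> whose fibre is a singleton; by compactness, points of \<open>X\<close>
  whose image is near \<open>\<pi> x\<^sub>0\<close> are near \<open>x\<^sub>0\<close>. In a minimal system it suffices to find,
  for each \<open>\<epsilon>\<close>, one nonempty open set with a syndetic set of \<open>\<epsilon>\<close>-equicontinuity times,
  since every orbit enters it. Downwards, a neighbourhood of \<open>x\<^sub>0\<close> contains the preimage
  of a neighbourhood of \<open>\<pi> x\<^sub>0\<close>, and uniform continuity of \<open>\<pi>\<close> transports the times.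
  Upwards, syndetic equicontinuity at \<open>\<pi> x\<^sub>0\<close> combined with uniformly bounded return
  times makes a whole neighbourhood of \<open>\<pi> x\<^sub>0\<close> return syndetically close to \<open>\<pi> x\<^sub>0\<close>;
  its preimage then returns close to \<open>x\<^sub>0\<close>.\<close>

lemma syndetic_mono: "syndetic A \<Longrightarrow> A \<subseteq> B \<Longrightarrow> syndetic B"
  unfolding syndetic_def by blast

lemma syndetic_image_bounded_shift:
  assumes "syndetic A" "\<And>n. n \<in> A \<Longrightarrow> k n \<le> K"
  shows "syndetic ((\<lambda>n. n + k n) ` A)"
proof -
  obtain L where L: "L > 0" "\<And>n. \<exists>m\<in>A. n \<le> m \<and> m < n + L"
    using assms(1) unfolding syndetic_def by blast
  show ?thesis unfolding syndetic_def
  proof (intro exI[of _ "L + K"] conjI allI)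
    fix n
    obtain m where m: "m \<in> A" "n \<le> m" "m < n + L" using L(2) by blast
    then show "\<exists>m\<in>(\<lambda>n. n + k n) ` A. n \<le> m \<and> m < n + (L + K)"
      using assms(2)[OF m(1)] by (intro bexI[of _ "m + k m"]) auto
  qed (use L in auto)
qed

lemma mem_J_set:
  "n \<in> J_set T U \<delta> \<longleftrightarrow> (\<forall>x1\<in>U. \<forall>x2\<in>U. dist ((T ^^ n) x1) ((T ^^ n) x2) \<le> \<delta>)"
  unfolding J_set_def S_set_def by (auto simp: not_less)

lemma J_set_antimono: "U \<subseteq> U' \<Longrightarrow> J_set T U' \<delta> \<subseteq> J_set T U \<delta>"
  unfolding J_set_def S_set_def by blast

lemma J_set_shift_preimage:
  "(\<lambda>n. n + k) ` J_set T V \<delta> \<subseteq> J_set T ((T ^^ k) -` V) \<delta>"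
  by (auto simp: mem_J_set funpow_add)

lemma funpow_in_invariant: "T ` X \<subseteq> X \<Longrightarrow> x \<in> X \<Longrightarrow> (T ^^ n) x \<in> X"
  by (induction n) auto

lemma continuous_on_funpow:
  assumes "continuous_on X T" "T ` X \<subseteq> X"
  shows "continuous_on X (T ^^ n)"
proof (induction n)
  case (Suc n)
  have "continuous_on ((T ^^ n) ` X) T"
    using continuous_on_subset[OF assms(1)] funpow_in_invariant[OF assms(2)] by blast
  then show ?case
    using continuous_on_compose[OF Suc.IH] by simp
qed (simp add: continuous_on_id)

lemma factor_map_funpow:
  assumes "factor_map X T Y S \<pi>" "T ` X \<subseteq> X" "x \<in> X"
  shows "\<pi> ((T ^^ n) x) = (S ^^ n) (\<pi> x)"
  using funpow_in_invariant[OF assms(2,3)] assms(1)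
  by (induction n) (auto simp: factor_map_def)

lemma uniformly_equicontinuous_funpow_upto:
  assumes "compact Y" "continuous_on Y S" "S ` Y \<subseteq> Y" "(e::real) > 0"
  shows "\<exists>\<delta>>0. \<forall>k\<le>K. \<forall>y1\<in>Y. \<forall>y2\<in>Y. dist y1 y2 < \<delta> \<longrightarrow> dist ((S ^^ k) y1) ((S ^^ k) y2) < e"
proof (induction K)
  case 0
  show ?case using assms(4) by (intro exI[of _ e]) auto
next
  case (Suc K)
  then obtain d1 where d1: "d1 > 0"
    "\<forall>k\<le>K. \<forall>y1\<in>Y. \<forall>y2\<in>Y. dist y1 y2 < d1 \<longrightarrow> dist ((S ^^ k) y1) ((S ^^ k) y2) < e"
    by blast
  have "uniformly_continuous_on Y (S ^^ Suc K)"
    using compact_uniformly_continuous[OF continuous_on_funpow[OF assms(2,3)] assms(1)] .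
  then obtain d2 where d2: "d2 > 0"
    "\<forall>y2\<in>Y. \<forall>y1\<in>Y. dist y1 y2 < d2 \<longrightarrow> dist ((S ^^ Suc K) y1) ((S ^^ Suc K) y2) < e"
    unfolding uniformly_continuous_on_def using assms(4) by blast
  show ?case
  proof (intro exI[of _ "min d1 d2"] conjI allI impI ballI)
    fix k y1 y2 assume k: "k \<le> Suc K" and y: "y1 \<in> Y" "y2 \<in> Y" "dist y1 y2 < min d1 d2"
    show "dist ((S ^^ k) y1) ((S ^^ k) y2) < e"
    proof (cases "k = Suc K")
      case True
      then show ?thesis using d2(2) y by simp
    next
      case False
      then show ?thesis using d1(2) k y by simp
    qed
  qed (use d1 d2 in simp)
qed

lemma minimal_systemD:
  assumes "minimal_system X T"
  shows "compact X" "continuous_on X T" "T ` X \<subseteq> X"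
    and "x \<in> X \<Longrightarrow> X \<subseteq> closure {(T ^^ n) x | n. True}"
  using assms unfolding minimal_system_def dyn_system_def by auto

lemma minimal_orbit_meets_open:
  assumes "minimal_system X T" "x \<in> X" "openin (top_of_set X) V" "V \<noteq> {}"
  obtains k where "(T ^^ k) x \<in> V"
proof -
  obtain Op where Op: "open Op" "V = X \<inter> Op" using assms(3) openin_open by blast
  obtain v where "v \<in> V" using assms(4) by blast
  then have "Op \<inter> closure {(T ^^ n) x | n. True} \<noteq> {}"
    using minimal_systemD(4)[OF assms(1,2)] Op(2) by blast
  then obtain k where "(T ^^ k) x \<in> Op"
    using open_Int_closure_eq_empty[OF Op(1)] by blast
  then show thesis
    using that Op(2) funpow_in_invariant[OF minimal_systemD(3)[OF assms(1)] assms(2)] by blast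
qed

lemma minimal_bounded_return_time:
  assumes "minimal_system X T" "openin (top_of_set X) V" "V \<noteq> {}"
  shows "\<exists>K. \<forall>z\<in>X. \<exists>k\<le>K. (T ^^ k) z \<in> V"
proof -
  define A where "A k = X \<inter> (T ^^ k) -` V" for k
  have "openin (top_of_set X) (A k)" for k
    unfolding A_def using minimal_systemD(2,3)[OF assms(1)] funpow_in_invariant
    by (intro continuous_openin_preimage[OF continuous_on_funpow _ assms(2)]) auto
  then have "\<forall>c\<in>range A. openin (top_of_set X) c" by blast
  moreover have "X \<subseteq> \<Union> (range A)"
  proof
    fix z assume z: "z \<in> X"
    then obtain k where "(T ^^ k) z \<in> V"
      by (rule minimal_orbit_meets_open[OF assms(1) _ assms(2,3)])
    then show "z \<in> \<Union> (range A)" using z unfolding A_def by blast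
  qed
  moreover have "(\<forall>c\<in>range A. openin (top_of_set X) c) \<and> X \<subseteq> \<Union> (range A) \<longrightarrow>
      (\<exists>D\<subseteq>range A. finite D \<and> X \<subseteq> \<Union> D)"
    using minimal_systemD(1)[OF assms(1)] unfolding compact_eq_openin_cover by (rule spec)
  ultimately obtain D where D: "D \<subseteq> range A" "finite D" "X \<subseteq> \<Union> D"
    by blast
  obtain F where F: "finite F" "D = A ` F"
    using finite_subset_image[OF D(2,1)] by blast
  show ?thesis
  proof (rule exI[of _ "Max (insert 0 F)"], intro ballI)
    fix z assume "z \<in> X"
    then obtain k where "k \<in> F" "z \<in> A k" using D(3) unfolding F(2) by blast
    then have "k \<in> F" "(T ^^ k) z \<in> V" unfolding A_def by auto
    then show "\<exists>k\<le>Max (insert 0 F). (T ^^ k) z \<in> V"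
      using F(1) by (intro exI[of _ k]) simp
  qed
qed

lemma minimal_synd_equicont_if_syndetic_open:
  assumes "minimal_system X T"
    and "\<And>e. e > 0 \<Longrightarrow> \<exists>V. openin (top_of_set X) V \<and> V \<noteq> {} \<and> syndetic (J_set T V e)"
  shows "synd_equicont X T"
  unfolding synd_equicont_def synd_equicont_point_def
proof (intro ballI allI impI)
  fix x and e :: real
  assume x: "x \<in> X" and "e > 0"
  then obtain V where V: "openin (top_of_set X) V" "V \<noteq> {}" "syndetic (J_set T V e)"
    using assms(2) by blast
  obtain k where k: "(T ^^ k) x \<in> V"
    using minimal_orbit_meets_open[OF assms(1) x V(1,2)] .
  define W where "W = X \<inter> (T ^^ k) -` V"
  have "openin (top_of_set X) W"
    unfolding W_def using minimal_systemD[OF assms(1)]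
    by (intro continuous_openin_preimage[OF continuous_on_funpow _ V(1)])
       (auto intro: funpow_in_invariant)
  then have "nbhd_in X x W"
    unfolding nbhd_in_def W_def using x k by blast
  moreover have "syndetic (J_set T W e)"
  proof (rule syndetic_mono)
    show "syndetic ((\<lambda>n. n + k) ` J_set T V e)"
      using syndetic_image_bounded_shift[OF V(3), of "\<lambda>_. k" k] by simp
    show "(\<lambda>n. n + k) ` J_set T V e \<subseteq> J_set T W e"
      using J_set_shift_preimage J_set_antimono[of W "(T ^^ k) -` V"] unfolding W_def by blast
  qed
  ultimately show "\<exists>U. nbhd_in X x U \<and> syndetic (J_set T U e)" by blast
qed

lemma singleton_fibre_small_preimage:
  fixes \<pi> :: "'a::metric_space \<Rightarrow> 'b::metric_space"
  assumes "compact X" "continuous_on X \<pi>" "\<And>x. x \<in> X \<Longrightarrow> \<pi> x = \<pi> z \<Longrightarrow> x = z"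
    "open Op" "z \<in> Op"
  shows "\<exists>\<eta>>0. \<forall>x\<in>X. dist (\<pi> x) (\<pi> z) < \<eta> \<longrightarrow> x \<in> Op"
proof -
  have "compact (X \<inter> - Op)" using assms(1,4) by (simp add: compact_Int_closed closed_Compl)
  then have "compact (\<pi> ` (X \<inter> - Op))"
    using compact_continuous_image continuous_on_subset[OF assms(2), of "X \<inter> - Op"] by blast
  then have "open (- \<pi> ` (X \<inter> - Op))" by (simp add: compact_imp_closed open_Compl)
  moreover have "\<pi> z \<in> - \<pi> ` (X \<inter> - Op)" using assms(3,5) by auto
  ultimately obtain \<eta> where "\<eta> > 0" "ball (\<pi> z) \<eta> \<subseteq> - \<pi> ` (X \<inter> - Op)"
    using open_contains_ball by blast
  show ?thesis
  proof (intro exI[of _ \<eta>] conjI ballI impI \<open>\<eta> > 0\<close>)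
    fix x assume "x \<in> X" "dist (\<pi> x) (\<pi> z) < \<eta>"
    then have "\<pi> x \<in> ball (\<pi> z) \<eta>" by (simp add: dist_commute)
    then show "x \<in> Op" using \<open>x \<in> X\<close> \<open>ball (\<pi> z) \<eta> \<subseteq> _\<close> by blast
  qed
qed

lemma synd_equicont_factor_of_singleton_fibre:
  assumes "compact X" "T ` X \<subseteq> X" "minimal_system Y S" "factor_map X T Y S \<pi>"
    and "\<And>x. x \<in> X \<Longrightarrow> \<pi> x = \<pi> x0 \<Longrightarrow> x = x0" "synd_equicont_point X T x0"
  shows "synd_equicont Y S"
proof (rule minimal_synd_equicont_if_syndetic_open[OF assms(3)])
  fix e :: real assume "e > 0"
  have \<pi>: "continuous_on X \<pi>" "\<pi> ` X = Y" using assms(4) unfolding factor_map_def by auto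
  obtain d where d: "d > 0" "\<forall>x\<in>X. \<forall>x'\<in>X. dist x' x < d \<longrightarrow> dist (\<pi> x') (\<pi> x) < e"
    using compact_uniformly_continuous[OF \<pi>(1) assms(1)] \<open>e > 0\<close>
    unfolding uniformly_continuous_on_def by blast
  have "d / 2 > 0" using d(1) by simp
  then obtain U where U: "nbhd_in X x0 U" "syndetic (J_set T U (d / 2))"
    using assms(6) unfolding synd_equicont_point_def by blast
  obtain U0 where U0: "openin (top_of_set X) U0" "x0 \<in> U0" "U0 \<subseteq> U"
    using U(1) unfolding nbhd_in_def by blast
  obtain Op where Op: "open Op" "U0 = X \<inter> Op" using U0(1) unfolding openin_open by blast
  have x0: "x0 \<in> X" "x0 \<in> Op" using U0(2) Op(2) by auto
  obtain \<eta> where \<eta>: "\<eta> > 0" "\<forall>x\<in>X. dist (\<pi> x) (\<pi> x0) < \<eta> \<longrightarrow> x \<in> Op"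
    using singleton_fibre_small_preimage[where z=x0, OF assms(1) \<pi>(1) assms(5) Op(1) x0(2)] by blast
  define V where "V = Y \<inter> ball (\<pi> x0) \<eta>"
  have "openin (top_of_set Y) V" unfolding V_def by (simp add: openin_open_Int)
  moreover have "V \<noteq> {}" using x0(1) \<pi>(2) \<eta>(1) unfolding V_def by auto
  moreover have "J_set T U (d / 2) \<subseteq> J_set S V e"
  proof
    fix n assume n: "n \<in> J_set T U (d / 2)"
    show "n \<in> J_set S V e" unfolding mem_J_set
    proof (intro ballI)
      fix y1 y2 assume y: "y1 \<in> V" "y2 \<in> V"
      then obtain x1 x2 where x: "x1 \<in> X" "x2 \<in> X" "\<pi> x1 = y1" "\<pi> x2 = y2"
        using \<pi>(2) unfolding V_def by blast
      have "dist (\<pi> x1) (\<pi> x0) < \<eta>" "dist (\<pi> x2) (\<pi> x0) < \<eta>"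
        using x(3,4) y unfolding V_def by (auto simp: dist_commute)
      then have "x1 \<in> U" "x2 \<in> U" using \<eta>(2) x(1,2) Op(2) U0(3) by auto
      then have "dist ((T ^^ n) x1) ((T ^^ n) x2) < d"
        using n d(1) unfolding mem_J_set by fastforce
      then have "dist (\<pi> ((T ^^ n) x1)) (\<pi> ((T ^^ n) x2)) < e"
        using d(2) funpow_in_invariant[OF assms(2)] x(1,2) by blast
      then show "dist ((S ^^ n) y1) ((S ^^ n) y2) \<le> e"
        using factor_map_funpow[OF assms(4,2)] x by simp
    qed
  qed
  ultimately show "\<exists>V. openin (top_of_set Y) V \<and> V \<noteq> {} \<and> syndetic (J_set S V e)"
    using U(2) syndetic_mono by blast
qed

lemma syndetic_returns_of_neighbourhood:
  assumes "minimal_system Y S" "y0 \<in> Y" "synd_equicont_point Y S y0" "r > 0"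
  obtains U where "nbhd_in Y y0 U" "syndetic {m. \<forall>y\<in>U. dist ((S ^^ m) y) y0 < r}"
proof -
  note Y = minimal_systemD(1-3)[OF assms(1)]
  have "openin (top_of_set Y) (Y \<inter> ball y0 (r / 2))" "Y \<inter> ball y0 (r / 2) \<noteq> {}"
    using assms(2,4) by (auto simp: openin_open_Int)
  then obtain K where K: "\<forall>z\<in>Y. \<exists>k\<le>K. (S ^^ k) z \<in> Y \<inter> ball y0 (r / 2)"
    using minimal_bounded_return_time[OF assms(1)] by blast
  obtain \<delta> where \<delta>: "\<delta> > 0"
    "\<forall>k\<le>K. \<forall>y1\<in>Y. \<forall>y2\<in>Y. dist y1 y2 < \<delta> \<longrightarrow> dist ((S ^^ k) y1) ((S ^^ k) y2) < r / 2"
    using uniformly_equicontinuous_funpow_upto[OF Y, of "r / 2" K] assms(4) by auto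
  have "\<delta> / 2 > 0" using \<delta>(1) by simp
  then obtain U where U: "nbhd_in Y y0 U" "syndetic (J_set S U (\<delta> / 2))"
    using assms(3) unfolding synd_equicont_point_def by blast
  have UY: "U \<subseteq> Y" and y0U: "y0 \<in> U" using U(1) unfolding nbhd_in_def by auto
  define kf where "kf n = (SOME k. k \<le> K \<and> dist ((S ^^ k) ((S ^^ n) y0)) y0 < r / 2)" for n
  have kf: "kf n \<le> K \<and> dist ((S ^^ kf n) ((S ^^ n) y0)) y0 < r / 2" for n
    unfolding kf_def
    by (rule someI_ex) (use K funpow_in_invariant[OF Y(3) assms(2)] in \<open>auto simp: dist_commute\<close>)
  have "(\<lambda>n. n + kf n) ` J_set S U (\<delta> / 2) \<subseteq> {m. \<forall>y\<in>U. dist ((S ^^ m) y) y0 < r}"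
  proof clarify
    fix n y assume n: "n \<in> J_set S U (\<delta> / 2)" and y: "y \<in> U"
    have "dist ((S ^^ n) y) ((S ^^ n) y0) < \<delta>"
      using n y y0U \<delta>(1) unfolding mem_J_set by fastforce
    then have "dist ((S ^^ kf n) ((S ^^ n) y)) ((S ^^ kf n) ((S ^^ n) y0)) < r / 2"
      using \<delta>(2) kf[of n] funpow_in_invariant[OF Y(3)] y UY assms(2) by blast
    then have "dist ((S ^^ kf n) ((S ^^ n) y)) y0 < r"
      using conjunct2[OF kf[of n]]
        dist_triangle[of "(S ^^ kf n) ((S ^^ n) y)" y0 "(S ^^ kf n) ((S ^^ n) y0)"] by linarith
    then show "dist ((S ^^ (n + kf n)) y) y0 < r"
      by (simp add: add.commute[of n] funpow_add)
  qed
  moreover have "syndetic ((\<lambda>n. n + kf n) ` J_set S U (\<delta> / 2))"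
    using syndetic_image_bounded_shift[OF U(2), of kf K] kf by blast
  ultimately show thesis
    using that U(1) syndetic_mono by blast
qed

lemma synd_equicont_lift_of_singleton_fibre:
  assumes "minimal_system X T" "minimal_system Y S" "factor_map X T Y S \<pi>" "x0 \<in> X"
    and "\<And>x. x \<in> X \<Longrightarrow> \<pi> x = \<pi> x0 \<Longrightarrow> x = x0" "synd_equicont_point Y S (\<pi> x0)"
  shows "synd_equicont X T"
proof (rule minimal_synd_equicont_if_syndetic_open[OF assms(1)])
  fix e :: real assume "e > 0"
  note X = minimal_systemD(1-3)[OF assms(1)]
  have \<pi>: "continuous_on X \<pi>" "\<pi> ` X = Y" using assms(3) unfolding factor_map_def by auto
  obtain \<eta> where \<eta>: "\<eta> > 0" "\<forall>x\<in>X. dist (\<pi> x) (\<pi> x0) < \<eta> \<longrightarrow> x \<in> ball x0 (e / 2)"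
    using singleton_fibre_small_preimage[where z=x0, OF X(1) \<pi>(1) assms(5) open_ball
        centre_in_ball[THEN iffD2, OF half_gt_zero[OF \<open>e > 0\<close>]]] by blast
  have y0: "\<pi> x0 \<in> Y" using assms(4) \<pi>(2) by blast
  obtain U where U: "nbhd_in Y (\<pi> x0) U" "syndetic {m. \<forall>y\<in>U. dist ((S ^^ m) y) (\<pi> x0) < \<eta>}"
    by (rule syndetic_returns_of_neighbourhood[OF assms(2) y0 assms(6) \<eta>(1)])
  obtain V where V: "openin (top_of_set Y) V" "\<pi> x0 \<in> V" "V \<subseteq> U"
    using U(1) unfolding nbhd_in_def by blast
  define W where "W = X \<inter> \<pi> -` V"
  have "openin (top_of_set X) W"
    unfolding W_def using continuous_openin_preimage[OF \<pi>(1) _ V(1)] \<pi>(2) by blast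
  moreover have "W \<noteq> {}" using assms(4) V(2) unfolding W_def by blast
  moreover have "{m. \<forall>y\<in>U. dist ((S ^^ m) y) (\<pi> x0) < \<eta>} \<subseteq> J_set T W e"
  proof
    fix m assume m: "m \<in> {m. \<forall>y\<in>U. dist ((S ^^ m) y) (\<pi> x0) < \<eta>}"
    have near: "dist x0 ((T ^^ m) x) < e / 2" if x: "x \<in> W" for x
    proof -
      have "x \<in> X" "\<pi> x \<in> U" using x V(3) unfolding W_def by auto
      then have "dist (\<pi> ((T ^^ m) x)) (\<pi> x0) < \<eta>"
        using m factor_map_funpow[OF assms(3) X(3)] by simp
      then show ?thesis using \<eta>(2) funpow_in_invariant[OF X(3) \<open>x \<in> X\<close>] by simp
    qed
    show "m \<in> J_set T W e" unfolding mem_J_set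
    proof (intro ballI)
      fix x1 x2 assume "x1 \<in> W" "x2 \<in> W"
      then show "dist ((T ^^ m) x1) ((T ^^ m) x2) \<le> e"
        using near[of x1] near[of x2] dist_triangle3[of "(T ^^ m) x1" "(T ^^ m) x2" x0] by linarith
    qed
  qed
  ultimately show "\<exists>V. openin (top_of_set X) V \<and> V \<noteq> {} \<and> syndetic (J_set T V e)"
    using U(2) syndetic_mono by blast
qed

lemma synd_equicont_iff_of_singleton_fibre:
  assumes "minimal_system X T" "minimal_system Y S" "factor_map X T Y S \<pi>" "x0 \<in> X"
    and "\<And>x. x \<in> X \<Longrightarrow> \<pi> x = \<pi> x0 \<Longrightarrow> x = x0"
  shows "synd_equicont X T \<longleftrightarrow> synd_equicont Y S"
proof
  assume "synd_equicont X T"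
  then have "synd_equicont_point X T x0" using assms(4) unfolding synd_equicont_def by blast
  then show "synd_equicont Y S"
    using synd_equicont_factor_of_singleton_fibre[OF minimal_systemD(1,3)[OF assms(1)] assms(2,3)]
      assms(5) by blast
next
  assume "synd_equicont Y S"
  then have "synd_equicont_point Y S (\<pi> x0)"
    using assms(3,4) unfolding synd_equicont_def factor_map_def by blast
  then show "synd_equicont X T"
    using synd_equicont_lift_of_singleton_fibre[OF assms(1-4)] assms(5) by blast
qed

lemma almost_one_to_one_singleton_fibre:
  assumes "almost_one_to_one X T Y S \<pi>" "X \<noteq> {}"
  shows "\<exists>x0\<in>X. \<forall>x\<in>X. \<pi> x = \<pi> x0 \<longrightarrow> x = x0"
proof -
  have "Y \<noteq> {}" "Y \<subseteq> closure {y\<in>Y. \<exists>!x. x \<in> X \<and> \<pi> x = y}"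
    using assms unfolding almost_one_to_one_def factor_map_def by auto
  then have "{y\<in>Y. \<exists>!x. x \<in> X \<and> \<pi> x = y} \<noteq> {}" by (metis closure_empty subset_empty)
  then show ?thesis by blast
qed

theorem proposition4p9:
  fixes X :: "'a::metric_space set" and T :: "'a \<Rightarrow> 'a"
    and Y :: "'b::metric_space set" and S :: "'b \<Rightarrow> 'b"
    and \<pi> :: "'a \<Rightarrow> 'b"
  assumes "minimal_system X T" and "minimal_system Y S"
    and "almost_one_to_one X T Y S \<pi>"
  shows "synd_equicont X T \<longleftrightarrow> synd_equicont Y S"
proof (cases "X = {}")
  case True
  then have "Y = {}" using assms(3) unfolding almost_one_to_one_def factor_map_def by auto
  with True show ?thesis unfolding synd_equicont_def by simp
next
  case False
  have "factor_map X T Y S \<pi>" using assms(3) unfolding almost_one_to_one_def by blast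
  moreover obtain x0 where "x0 \<in> X" "\<forall>x\<in>X. \<pi> x = \<pi> x0 \<longrightarrow> x = x0"
    using almost_one_to_one_singleton_fibre[OF assms(3) False] by blast
  ultimately show ?thesis
    using synd_equicont_iff_of_singleton_fibre[OF assms(1,2)] by blast
qed

end
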